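(* Let $K=\{x\in\mathbb{R}^m:Ax\succeq0\}$ with $A\in\mathcal{A}$, and assume $F$ is $K$-smooth with $\ell\in\mathrm{int}(K)$ and strongly $K$-convex with $\mu\in\mathrm{int}(K)$. Let the constants in the Barzilai-Borwein rule satisfy $0<\alpha_{\min}\le\min_{i\in[l]}\langle A_i,\mu\rangle$ and $\alpha_{\max}\ge\max_{i\in[l]}\langle A_i,\ell\rangle$, let $x^{-1}\ne x^0$, and let $\{x^k\}$ be generated by Algorithm 8 with $\gamma\in(0,1)$, assumed not to terminate ($d^k\neq0$ for all $k$). Then: (i) $A\mu\preceq\alpha^k\preceq A\ell$ for all $k$; (ii) $t_k\ge\min_{i\in[l]}\gamma\alpha_i^k/\langle A_i,\ell\rangle$; (iii) $\{x^k\}$ converges to an efficient solution $x^*$ of $\min_K F(x)$; (iv) $\|x^{k+1}-x^*\|\le\sqrt{1-\min_{i\in[l]}t_k\langle A_i,\mu\rangle/\alpha_i^k}\,\|x^k-x^*\|$ for all $k\ge0$.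
   Context: $K\subset\mathbb{R}^m$ is a pointed polyhedral cone with nonempty interior; $y\preceq_K y'$ iff $y'-y\in K$; on $\mathbb{R}^l$, $\preceq$ is componentwise. $\mathcal{A}:=\{A\in\mathbb{R}^{l\times m}:AK=\mathbb{R}^l_+\}$, $K=\{x:Ax\succeq0\}$; $A_i$ is the $i$-th row of $A$, $[l]=\{1,\dots,l\}$, $\Delta_l=\{\lambda\in\mathbb{R}^l_+:\sum_i\lambda_i=1\}$. $F:\mathbb{R}^n\to\mathbb{R}^m$ differentiable with Jacobian $JF$. Strongly $K$-convex with $\mu$: $JF(x)(y-x)+\tfrac12\|y-x\|^2\mu\preceq_K F(y)-F(x)$ $\forall x,y$; $K$-smooth with $\ell$: $F(y)-F(x)\preceq_K JF(x)(y-x)+\tfrac12\|y-x\|^2\ell$ $\forall x,y$. Efficient: no $x$ with $F(x)\preceq_K F(x^* )$, $F(x)\ne F(x^* )$. Barzilai-Borwein rule: with $s_{k-1}=x^k-x^{k-1}$ and $y_i^{k-1}$ the $i$-th row of $A(JF(x^k)-JF(x^{k-1}))$ (a vector in $\mathbb{R}^n$), $\alpha_i^k:=\max\{\alpha_{\min},\min\{\langle s_{k-1},y_i^{k-1}\rangle/\|s_{k-1}\|^2,\alpha_{\max}\}\}$ if $\langle s_{k-1},y_i^{k-1}\rangle>0$; $\alpha_i^k:=\max\{\alpha_{\min},\min\{\|y_i^{k-1}\|/\|s_{k-1}\|,\alpha_{\max}\}\}$ if $\langle s_{k-1},y_i^{k-1}\rangle<0$; $\alpha_i^k:=\alpha_{\min}$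 if it equals $0$. Algorithm 8 ($K$-Barzilai-Borwein descent method): given $x^0$, $x^{-1}$, for $k=0,1,\dots$: compute $\alpha^k$; with $\Lambda^k=\mathrm{diag}(1/\alpha_1^k,\dots,1/\alpha_l^k)$, $d^k:=\arg\min_{d}\max_{\lambda\in\Delta_l}\langle\lambda,\Lambda^kAJF(x^k)d\rangle+\tfrac12\|d\|^2$; if $d^k=0$ stop; otherwise $t_k:=\max\{\gamma^j:j\in\mathbb{N},\ A(F(x^k+\gamma^jd^k)-F(x^k))\preceq\gamma^j(AJF(x^k)d^k+\tfrac12\|d^k\|^2\alpha^k)\}$, $x^{k+1}:=x^k+t_kd^k$. *)

theory Defs
  imports "HOL-Analysis.Analysis"
begin

definition cone_le :: "'m set \<Rightarrow> 'm::real_vector \<Rightarrow> 'm \<Rightarrow> bool" where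
  "cone_le K y y' \<longleftrightarrow> y' - y \<in> K"

definition vec_le :: "real^'l \<Rightarrow> real^'l \<Rightarrow> bool" where
  "vec_le u v \<longleftrightarrow> (\<forall>i. u $ i \<le> v $ i)"

definition nonneg_orthant :: "(real^'l) set" where
  "nonneg_orthant = {z. \<forall>i. 0 \<le> z $ i}"

definition prob_simplex :: "(real^'l) set" where
  "prob_simplex = {lam. (\<forall>i. 0 \<le> lam $ i) \<and> (\<Sum>i\<in>UNIV. lam $ i) = 1}"

definition polyhedral_cone :: "real^'m^'l \<Rightarrow> (real^'m) set" where
  "polyhedral_cone A = {x. vec_le 0 (A *v x)}"

definition pointed_cone :: "(real^'m) set \<Rightarrow> bool" where
  "pointed_cone K \<longleftrightarrow> K \<inter> uminus ` K = {0}"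

definition strongly_K_convex ::
  "(real^'m) set \<Rightarrow> (real^'n \<Rightarrow> real^'m) \<Rightarrow> (real^'n \<Rightarrow> real^'n^'m) \<Rightarrow> real^'m \<Rightarrow> bool" where
  "strongly_K_convex K F JF mu \<longleftrightarrow>
     (\<forall>x y. cone_le K (JF x *v (y - x) + ((1/2) * (norm (y - x))\<^sup>2) *\<^sub>R mu) (F y - F x))"

definition K_smooth ::
  "(real^'m) set \<Rightarrow> (real^'n \<Rightarrow> real^'m) \<Rightarrow> (real^'n \<Rightarrow> real^'n^'m) \<Rightarrow> real^'m \<Rightarrow> bool" where
  "K_smooth K F JF ell \<longleftrightarrow>
     (\<forall>x y. cone_le K (F y - F x) (JF x *v (y - x) + ((1/2) * (norm (y - x))\<^sup>2) *\<^sub>R ell))"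

definition K_efficient :: "(real^'m) set \<Rightarrow> (real^'n \<Rightarrow> real^'m) \<Rightarrow> real^'n \<Rightarrow> bool" where
  "K_efficient K F xs \<longleftrightarrow> \<not> (\<exists>x. cone_le K (F x) (F xs) \<and> F x \<noteq> F xs)"

text \<open>Barzilai-Borwein stepsizes alpha^k computed from x^{k-1} = xp and x^k = xc.\<close>
definition bb_alpha ::
  "real \<Rightarrow> real \<Rightarrow> real^'m^'l \<Rightarrow> (real^'n \<Rightarrow> real^'n^'m) \<Rightarrow> real^'n \<Rightarrow> real^'n \<Rightarrow> real^'l" where
  "bb_alpha amin amax A JF xp xc =
     (\<chi> i. let s = xc - xp; y = (A ** (JF xc - JF xp)) $ i in
       if inner s y > 0 then max amin (min (inner s y / (norm s)\<^sup>2) amax)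
       else if inner s y < 0 then max amin (min (norm y / norm s) amax)
       else amin)"

definition dir_obj ::
  "real^'m^'l \<Rightarrow> real^'n^'m \<Rightarrow> real^'l \<Rightarrow> real^'n \<Rightarrow> real" where
  "dir_obj A J alpha d =
     (SUP lam\<in>prob_simplex. inner lam (\<chi> i. (A *v (J *v d)) $ i / alpha $ i))
       + (1/2) * (norm d)\<^sup>2"

definition bb_accept ::
  "real^'m^'l \<Rightarrow> (real^'n \<Rightarrow> real^'m) \<Rightarrow> (real^'n \<Rightarrow> real^'n^'m) \<Rightarrow> real \<Rightarrow> real^'l
     \<Rightarrow> real^'n \<Rightarrow> real^'n \<Rightarrow> nat \<Rightarrow> bool" where
  "bb_accept A F JF gamma alpha x d j \<longleftrightarrow>
     vec_le (A *v (F (x + gamma ^ j *\<^sub>R d) - F x))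
            (gamma ^ j *\<^sub>R (A *v (JF x *v d) + ((1/2) * (norm d)\<^sup>2) *\<^sub>R alpha))"

text \<open>t_k = max { gamma^j : j in N, test holds }; for 0 < gamma < 1 this is gamma^(least such j).\<close>
definition bb_stepsize ::
  "real^'m^'l \<Rightarrow> (real^'n \<Rightarrow> real^'m) \<Rightarrow> (real^'n \<Rightarrow> real^'n^'m) \<Rightarrow> real \<Rightarrow> real^'l
     \<Rightarrow> real^'n \<Rightarrow> real^'n \<Rightarrow> real" where
  "bb_stepsize A F JF gamma alpha x d = gamma ^ (LEAST j. bb_accept A F JF gamma alpha x d j)"

end

theory Submission
  imports Defs
begin

text \<open>
  Everything is scalarised along the rows of \<open>A\<close>: the components \<open>f\<^sub>i = \<langle>A\<^sub>i, F\<rangle>\<close> are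
  strongly convex with modulus \<open>\<langle>A\<^sub>i, \<mu>\<rangle>\<close> and smooth with modulus \<open>\<langle>A\<^sub>i, \<ell>\<rangle>\<close>.
  The resulting two-sided secant bounds trap every Barzilai-Borwein quotient between these
  moduli, and they make any trial step \<open>\<gamma>\<^sup>j\<close> with \<open>\<gamma>\<^sup>j\<langle>A\<^sub>i, \<ell>\<rangle> \<le> \<alpha>\<^sub>i\<^sup>k\<close> for all \<open>i\<close>
  acceptable, which bounds \<open>t\<^sub>k\<close> from below.

  The variational inequality of the direction subproblem, combined with strong convexity
  and the Armijo decrease, gives the contraction
  \<open>\<parallel>x\<^sup>k\<^sup>+\<^sup>1 - z\<parallel>\<^sup>2 \<le> (1 - t\<^sub>k\<langle>A\<^sub>i, \<mu>\<rangle>/\<alpha>\<^sub>i\<^sup>k) \<parallel>x\<^sup>k - z\<parallel>\<^sup>2\<close> for every \<open>z\<close> that is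
  componentwise below \<open>x\<^sup>k\<^sup>+\<^sup>1\<close>. The components decrease along the iterates, which therefore
  stay in a bounded sublevel set; a cluster point lies below all iterates, so the contraction
  forces the whole sequence to converge to it. Any point dominating this limit is again below
  all iterates, hence equal to it, which is efficiency.
\<close>

lemma nonneg_if_nonneg_along_vanishing_perturbation:
  fixes a b :: real
  assumes "\<And>s. 0 < s \<Longrightarrow> s < 1 \<Longrightarrow> 0 \<le> a + s * b"
  shows "0 \<le> a"
proof -
  have "((\<lambda>s. a + s * b) \<longlongrightarrow> a) (at_right 0)"
    by (auto intro!: tendsto_eq_intros)
  moreover have "\<forall>\<^sub>F s in at_right 0. 0 \<le> a + s * b"
    unfolding eventually_at_right[OF zero_less_one] by (intro exI[of _ 1]) (use assms in auto)
  ultimately show ?thesis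
    by (rule tendsto_lowerbound) simp
qed

lemma Sup_inner_prob_simplex:
  fixes v :: "real^'l"
  shows "(SUP lam\<in>prob_simplex. inner lam v) = Max (range (\<lambda>i. v $ i))"
proof -
  have "Max (range (\<lambda>i. v $ i)) \<in> range (\<lambda>i. v $ i)"
    by (rule Max_in) auto
  then obtain i0 where i0: "v $ i0 = Max (range (\<lambda>i. v $ i))"
    by (metis rangeE)
  have "inner lam v \<le> v $ i0" if "lam \<in> prob_simplex" for lam
  proof -
    have "inner lam v = (\<Sum>i\<in>UNIV. lam $ i * v $ i)" by (simp add: inner_vec_def)
    also have "\<dots> \<le> (\<Sum>i\<in>UNIV. lam $ i * v $ i0)"
      unfolding i0 using that by (intro sum_mono mult_left_mono) (auto simp: prob_simplex_def)
    also have "\<dots> = v $ i0"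
      using that by (simp add: prob_simplex_def flip: sum_distrib_right)
    finally show ?thesis .
  qed
  moreover have "axis i0 1 \<in> prob_simplex"
    by (simp add: prob_simplex_def axis_def)
  moreover have "inner (axis i0 1) v = v $ i0"
    by (simp add: inner_axis')
  ultimately have "(SUP lam\<in>prob_simplex. inner lam v) = v $ i0"
    by (intro cSup_eq_maximum) (auto intro!: image_eqI[where x = "axis i0 1"])
  with i0 show ?thesis by simp
qed

text \<open>The optimality of \<open>d\<close> is tested along the segment towards \<open>e\<close>, on which the maximum
  of linear functions is bounded by interpolation.\<close>
lemma max_linear_prox_optimality:
  fixes c :: "'i::finite \<Rightarrow> 'a::real_inner"
  assumes opt: "\<And>e. Max (range (\<lambda>i. c i \<bullet> d)) + (1/2) * (norm d)\<^sup>2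
                     \<le> Max (range (\<lambda>i. c i \<bullet> e)) + (1/2) * (norm e)\<^sup>2"
  shows "\<exists>i. Max (range (\<lambda>i. c i \<bullet> d)) + (norm d)\<^sup>2 \<le> c i \<bullet> e + d \<bullet> e"
proof -
  define M where "M = Max (range (\<lambda>i. c i \<bullet> d))"
  have "Max (range (\<lambda>i. c i \<bullet> e)) \<in> range (\<lambda>i. c i \<bullet> e)"
    by (rule Max_in) auto
  then obtain j where j: "c j \<bullet> e = Max (range (\<lambda>i. c i \<bullet> e))"
    by (metis (no_types) rangeE)
  have "0 \<le> (c j \<bullet> e + d \<bullet> e - M - (norm d)\<^sup>2) + s * ((1/2) * (norm (e - d))\<^sup>2)"
    if s: "0 < s" "s < 1" for s
  proof -
    have "Max (range (\<lambda>i. c i \<bullet> (d + s *\<^sub>R (e - d)))) \<le> (1 - s) * M + s * (c j \<bullet> e)"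
    proof (rule Max.boundedI)
      fix a assume "a \<in> range (\<lambda>i. c i \<bullet> (d + s *\<^sub>R (e - d)))"
      then obtain i where "a = c i \<bullet> (d + s *\<^sub>R (e - d))"
        by blast
      hence a: "a = (1 - s) * (c i \<bullet> d) + s * (c i \<bullet> e)"
        by (simp add: algebra_simps)
      have bounds: "c i \<bullet> d \<le> M" "c i \<bullet> e \<le> c j \<bullet> e"
        unfolding M_def j by (auto intro: Max_ge)
      show "a \<le> (1 - s) * M + s * (c j \<bullet> e)"
        unfolding a using s bounds by (intro add_mono mult_left_mono) auto
    qed auto
    moreover have "(norm (d + s *\<^sub>R (e - d)))\<^sup>2
        = (norm d)\<^sup>2 + 2 * s * (d \<bullet> e - (norm d)\<^sup>2) + s\<^sup>2 * (norm (e - d))\<^sup>2"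
      unfolding power2_norm_eq_inner
      by (simp add: algebra_simps power2_eq_square inner_commute)
    ultimately have "M + (1/2) * (norm d)\<^sup>2 \<le> (1 - s) * M + s * (c j \<bullet> e)
        + (1/2) * ((norm d)\<^sup>2 + 2 * s * (d \<bullet> e - (norm d)\<^sup>2) + s\<^sup>2 * (norm (e - d))\<^sup>2)"
      using opt[of "d + s *\<^sub>R (e - d)"] unfolding M_def by (smt (verit))
    hence "0 \<le> s * ((c j \<bullet> e + d \<bullet> e - M - (norm d)\<^sup>2) + s * ((1/2) * (norm (e - d))\<^sup>2))"
      by (simp add: algebra_simps power2_eq_square)
    with s show ?thesis by (simp add: zero_le_mult_iff)
  qed
  hence "0 \<le> c j \<bullet> e + d \<bullet> e - M - (norm d)\<^sup>2"
    by (rule nonneg_if_nonneg_along_vanishing_perturbation)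
  thus ?thesis unfolding M_def by (intro exI[of _ j]) linarith
qed

lemma max_linear_prox_value_bounds:
  fixes c :: "'i::finite \<Rightarrow> 'a::real_inner"
  assumes opt: "\<And>e. Max (range (\<lambda>i. c i \<bullet> d)) + (1/2) * (norm d)\<^sup>2
                     \<le> Max (range (\<lambda>i. c i \<bullet> e)) + (1/2) * (norm e)\<^sup>2"
  shows "- (norm d)\<^sup>2 \<le> Max (range (\<lambda>i. c i \<bullet> d))"
    and "Max (range (\<lambda>i. c i \<bullet> d)) \<le> - (1/2) * (norm d)\<^sup>2"
proof -
  obtain i where "Max (range (\<lambda>i. c i \<bullet> d)) + (norm d)\<^sup>2 \<le> c i \<bullet> (2 *\<^sub>R d) + d \<bullet> (2 *\<^sub>R d)"
    using max_linear_prox_optimality[OF opt] by blast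
  hence "Max (range (\<lambda>i. c i \<bullet> d)) + (norm d)\<^sup>2 \<le> 2 * (c i \<bullet> d) + 2 * (norm d)\<^sup>2"
    by (simp add: power2_norm_eq_inner)
  moreover have "c i \<bullet> d \<le> Max (range (\<lambda>i. c i \<bullet> d))"
    by (rule Max_ge) auto
  ultimately show "- (norm d)\<^sup>2 \<le> Max (range (\<lambda>i. c i \<bullet> d))"
    by linarith
  have "Max (range (\<lambda>i. c i \<bullet> 0)) + (1/2) * (norm (0::'a))\<^sup>2 = 0"
    by simp
  with opt[of 0] show "Max (range (\<lambda>i. c i \<bullet> d)) \<le> - (1/2) * (norm d)\<^sup>2"
    by linarith
qed

lemma backtracking_power_bounds:
  fixes \<gamma> \<rho> :: real
  assumes \<gamma>: "0 < \<gamma>" "\<gamma> < 1" and \<rho>: "0 < \<rho>" "\<rho> \<le> 1"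
    and accept: "\<And>j. \<gamma> ^ j \<le> \<rho> \<Longrightarrow> P j"
  shows "P (LEAST j. P j)" and "\<gamma> * \<rho> \<le> \<gamma> ^ (LEAST j. P j)"
proof -
  obtain j where "\<gamma> ^ j < \<rho>"
    using real_arch_pow_inv[OF \<rho>(1) \<gamma>(2)] by blast
  with accept show "P (LEAST j. P j)"
    by (intro LeastI[of P j]) simp
  show "\<gamma> * \<rho> \<le> \<gamma> ^ (LEAST j. P j)"
  proof (cases "LEAST j. P j")
    case 0
    with \<gamma> \<rho> show ?thesis by (simp add: mult_le_one)
  next
    case (Suc j)
    hence "\<not> P j"
      using not_less_Least[of j P] by simp
    hence "\<rho> < \<gamma> ^ j"
      using accept by force
    with Suc \<gamma> show ?thesis by simp
  qed
qed

lemma LIMSEQ_of_contraction: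
  fixes x :: "nat \<Rightarrow> 'a::real_normed_vector"
  assumes c: "0 \<le> c" "c < 1" and step: "\<And>k. norm (x (Suc k) - w) \<le> c * norm (x k - w)"
  shows "x \<longlonglongrightarrow> w"
proof -
  have geometric: "norm (x k - w) \<le> c ^ k * norm (x 0 - w)" for k
  proof (induction k)
    case (Suc k)
    have "norm (x (Suc k) - w) \<le> c * (c ^ k * norm (x 0 - w))"
      using order_trans[OF step[of k] mult_left_mono[OF Suc.IH c(1)]] .
    thus ?case by (simp add: mult.assoc)
  qed simp
  have "(\<lambda>k. c ^ k) \<longlonglongrightarrow> 0"
    using c by (intro LIMSEQ_power_zero) simp
  hence "(\<lambda>k. c ^ k * norm (x 0 - w)) \<longlonglongrightarrow> 0"
    by (rule tendsto_mult_left_zero)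
  hence "(\<lambda>k. x k - w) \<longlonglongrightarrow> 0"
    by (rule Lim_null_comparison[rotated]) (use geometric in \<open>auto intro: always_eventually\<close>)
  thus ?thesis by (rule LIM_zero_cancel)
qed

locale strongly_convex_smooth_family =
  fixes f :: "'i::finite \<Rightarrow> 'a::euclidean_space \<Rightarrow> real"
    and g :: "'i \<Rightarrow> 'a \<Rightarrow> 'a"
    and m L :: "'i \<Rightarrow> real"
  assumes strongly_convex: "\<And>i x y. g i x \<bullet> (y - x) + (1/2) * (norm (y - x))\<^sup>2 * m i \<le> f i y - f i x"
    and smooth: "\<And>i x y. f i y - f i x \<le> g i x \<bullet> (y - x) + (1/2) * (norm (y - x))\<^sup>2 * L i"
    and m_pos: "\<And>i. 0 < m i"
    and continuous: "\<And>i x. isCont (f i) x"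
begin

lemma secant_bounds:
  shows "m i * (norm (y - x))\<^sup>2 \<le> (y - x) \<bullet> (g i y - g i x)"
    and "(y - x) \<bullet> (g i y - g i x) \<le> L i * (norm (y - x))\<^sup>2"
proof -
  have facts: "(y - x) \<bullet> (g i y - g i x) = g i y \<bullet> (y - x) - g i x \<bullet> (y - x)"
    "g i y \<bullet> (x - y) = - (g i y \<bullet> (y - x))"
    "(norm (x - y))\<^sup>2 = (norm (y - x))\<^sup>2"
    by (simp_all add: inner_diff_left inner_diff_right inner_commute norm_minus_commute)
  note bounds = strongly_convex[where i = i and x = x and y = y] strongly_convex[where i = i and x = y and y = x]
    smooth[where i = i and x = x and y = y] smooth[where i = i and x = y and y = x]
  show "m i * (norm (y - x))\<^sup>2 \<le> (y - x) \<bullet> (g i y - g i x)"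
    using facts bounds by (simp add: algebra_simps)
  show "(y - x) \<bullet> (g i y - g i x) \<le> L i * (norm (y - x))\<^sup>2"
    using facts bounds by (simp add: algebra_simps)
qed

lemma m_le_L: "m i \<le> L i"
proof -
  obtain b :: 'a where "b \<in> Basis"
    using nonempty_Basis by blast
  hence "0 < (norm b)\<^sup>2"
    by (simp add: nonzero_Basis)
  moreover have "m i * (norm b)\<^sup>2 \<le> L i * (norm b)\<^sup>2"
    using secant_bounds[where i = i and x = 0 and y = b] by simp
  ultimately show ?thesis
    by simp
qed

lemma L_pos: "0 < L i"
  using m_pos[of i] m_le_L[of i] by linarith

lemma sufficient_decrease_of_short_step:
  assumes "0 < \<tau>" "\<tau> * L i \<le> a"
  shows "f i (x + \<tau> *\<^sub>R v) - f i x \<le> \<tau> * (g i x \<bullet> v + (1/2) * (norm v)\<^sup>2 * a)"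
proof -
  have "f i (x + \<tau> *\<^sub>R v) - f i x \<le> \<tau> * (g i x \<bullet> v) + (1/2) * \<tau> * (norm v)\<^sup>2 * (\<tau> * L i)"
    using smooth[where i = i and x = x and y = "x + \<tau> *\<^sub>R v"] assms(1)
    by (simp add: power2_eq_square algebra_simps)
  also have "\<dots> \<le> \<tau> * (g i x \<bullet> v) + (1/2) * \<tau> * (norm v)\<^sup>2 * a"
    using assms by (intro add_left_mono mult_left_mono) auto
  finally show ?thesis
    by (simp add: algebra_simps)
qed

lemma sublevel_bounded:
  assumes "f i y \<le> f i x"
  shows "norm (y - x) \<le> 2 * norm (g i x) / m i"
proof -
  have "(1/2) * (norm (y - x))\<^sup>2 * m i \<le> - (g i x \<bullet> (y - x))"
    using strongly_convex[where i = i and x = x and y = y] assms by linarith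
  also have "\<dots> \<le> norm (g i x) * norm (y - x)"
    using norm_cauchy_schwarz[of "- g i x" "y - x"] by simp
  finally have "norm (y - x) * ((1/2) * norm (y - x) * m i) \<le> norm (y - x) * norm (g i x)"
    by (simp add: power2_eq_square algebra_simps)
  hence "norm (y - x) = 0 \<or> (1/2) * norm (y - x) * m i \<le> norm (g i x)"
    by (metis mult_le_cancel_left_pos norm_ge_zero order_neq_le_trans)
  thus ?thesis
    using m_pos[of i] by (auto simp: field_simps)
qed

end

text \<open>Algorithm 8 after scalarisation. The Barzilai-Borwein rule enters only through the
  bounds on \<open>alpha\<close>, and \<open>stepsize\<close> expresses the largest accepted \<open>gamma ^ j\<close>.\<close>
locale bb_descent = strongly_convex_smooth_family f g m L
  for f :: "'i::finite \<Rightarrow> 'a::euclidean_space \<Rightarrow> real" and g m L +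
  fixes gamma :: real
    and alpha :: "nat \<Rightarrow> 'i \<Rightarrow> real"
    and x d :: "nat \<Rightarrow> 'a"
    and t :: "nat \<Rightarrow> real"
  assumes gamma: "0 < gamma" "gamma < 1"
    and alpha_lower: "\<And>k i. m i \<le> alpha k i"
    and alpha_upper: "\<And>k i. alpha k i \<le> L i"
    and direction: "\<And>k e. Max (range (\<lambda>i. (g i (x k) /\<^sub>R alpha k i) \<bullet> d k)) + (1/2) * (norm (d k))\<^sup>2
                      \<le> Max (range (\<lambda>i. (g i (x k) /\<^sub>R alpha k i) \<bullet> e)) + (1/2) * (norm e)\<^sup>2"
    and stepsize: "\<And>k. t k = gamma ^ (LEAST j. \<forall>i. f i (x k + gamma ^ j *\<^sub>R d k) - f i (x k)
                      \<le> gamma ^ j * (g i (x k) \<bullet> d k + (1/2) * (norm (d k))\<^sup>2 * alpha k i))"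
    and iterate: "\<And>k. x (Suc k) = x k + t k *\<^sub>R d k"
begin

lemma alpha_pos: "0 < alpha k i"
  using m_pos[of i] alpha_lower[of i k] by linarith

lemma inner_scaled_gradient: "(g i (x k) /\<^sub>R alpha k i) \<bullet> v = (g i (x k) \<bullet> v) / alpha k i"
  using alpha_pos[of k i] by (simp add: field_simps)

lemma descent_direction: "g i (x k) \<bullet> d k + (1/2) * (norm (d k))\<^sup>2 * alpha k i \<le> 0"
proof -
  have "(g i (x k) /\<^sub>R alpha k i) \<bullet> d k \<le> Max (range (\<lambda>i. (g i (x k) /\<^sub>R alpha k i) \<bullet> d k))"
    by (rule Max_ge) auto
  also have "\<dots> \<le> - (1/2) * (norm (d k))\<^sup>2"
    by (rule max_linear_prox_value_bounds(2)[OF direction])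
  finally have "(g i (x k) \<bullet> d k) / alpha k i \<le> - (1/2) * (norm (d k))\<^sup>2"
    by (simp only: inner_scaled_gradient)
  hence "g i (x k) \<bullet> d k \<le> - (1/2) * (norm (d k))\<^sup>2 * alpha k i"
    using alpha_pos[of k i] by (simp add: pos_divide_le_eq)
  thus ?thesis
    by simp
qed

lemma stepsize_bounds:
  shows "0 < t k" and "t k \<le> 1"
    and "Min (range (\<lambda>i. gamma * alpha k i / L i)) \<le> t k"
    and "f i (x (Suc k)) - f i (x k) \<le> t k * (g i (x k) \<bullet> d k + (1/2) * (norm (d k))\<^sup>2 * alpha k i)"
proof -
  define accept where "accept j \<longleftrightarrow> (\<forall>i. f i (x k + gamma ^ j *\<^sub>R d k) - f i (x k)
      \<le> gamma ^ j * (g i (x k) \<bullet> d k + (1/2) * (norm (d k))\<^sup>2 * alpha k i))" for j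
  define \<rho> where "\<rho> = Min (range (\<lambda>i. alpha k i / L i))"
  have "\<rho> \<in> range (\<lambda>i. alpha k i / L i)"
    unfolding \<rho>_def by (rule Min_in) auto
  then obtain i0 where i0: "\<rho> = alpha k i0 / L i0"
    by blast
  have \<rho>_pos: "0 < \<rho>" and \<rho>_le_1: "\<rho> \<le> 1"
    using i0 alpha_pos[of k i0] alpha_upper[of k i0] L_pos[of i0] by auto
  have "accept j" if "gamma ^ j \<le> \<rho>" for j
    unfolding accept_def
  proof
    fix i
    have "gamma ^ j * L i \<le> \<rho> * L i"
      using that L_pos[of i] by (simp add: mult_right_mono)
    also have "\<dots> \<le> alpha k i / L i * L i"
      unfolding \<rho>_def using L_pos[of i] by (intro mult_right_mono Min_le) auto
    also have "\<dots> = alpha k i"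
      using L_pos[of i] by simp
    finally show "f i (x k + gamma ^ j *\<^sub>R d k) - f i (x k)
        \<le> gamma ^ j * (g i (x k) \<bullet> d k + (1/2) * (norm (d k))\<^sup>2 * alpha k i)"
      using gamma by (intro sufficient_decrease_of_short_step) auto
  qed
  from backtracking_power_bounds[OF gamma \<rho>_pos \<rho>_le_1, of accept, OF this]
  have accepted: "accept (LEAST j. accept j)" and lower: "gamma * \<rho> \<le> t k"
    by (simp_all add: stepsize accept_def)
  show "0 < t k" "t k \<le> 1"
    using gamma by (simp_all add: stepsize power_le_one)
  show "f i (x (Suc k)) - f i (x k) \<le> t k * (g i (x k) \<bullet> d k + (1/2) * (norm (d k))\<^sup>2 * alpha k i)"
    using accepted by (simp add: accept_def iterate stepsize)
  have "Min (range (\<lambda>i. gamma * alpha k i / L i)) \<le> gamma * alpha k i0 / L i0"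
    by (rule Min_le) auto
  also have "\<dots> = gamma * \<rho>"
    using i0 by simp
  finally show "Min (range (\<lambda>i. gamma * alpha k i / L i)) \<le> t k"
    using lower by linarith
qed

lemma f_decreasing: "f i (x (Suc k)) \<le> f i (x k)"
proof -
  have "t k * (g i (x k) \<bullet> d k + (1/2) * (norm (d k))\<^sup>2 * alpha k i) \<le> 0"
    using stepsize_bounds(1) descent_direction by (rule mult_nonneg_nonpos[OF less_imp_le])
  with stepsize_bounds(4) show ?thesis
    by (smt (verit))
qed

lemma f_antimono:
  assumes "k \<le> n"
  shows "f i (x n) \<le> f i (x k)"
  using assms
proof (induction n rule: dec_induct)
  case (step n)
  with f_decreasing[of i n] show ?case
    by linarith
qed simp

lemma squared_distance_contraction:
  assumes below: "\<And>i. f i z \<le> f i (x (Suc k))"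
  obtains i where "(norm (x (Suc k) - z))\<^sup>2 \<le> (1 - t k * m i / alpha k i) * (norm (x k - z))\<^sup>2"
proof -
  define M where "M = Max (range (\<lambda>i. (g i (x k) /\<^sub>R alpha k i) \<bullet> d k))"
  define D where "D = d k \<bullet> (z - x k)"
  define N where "N = (norm (x k - z))\<^sup>2"
  define dd where "dd = (norm (d k))\<^sup>2"
  obtain i where opt: "M + dd \<le> (g i (x k) \<bullet> (z - x k)) / alpha k i + D"
    using max_linear_prox_optimality[OF direction, of k "z - x k"]
    unfolding M_def D_def dd_def inner_scaled_gradient by blast
  have M_dd: "0 \<le> M + dd"
    using max_linear_prox_value_bounds(1)[OF direction, of k] unfolding M_def dd_def by linarith
  have "(g i (x k) \<bullet> d k) / alpha k i \<le> M"
    unfolding M_def inner_scaled_gradient[symmetric] by (rule Max_ge) auto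
  hence model: "g i (x k) \<bullet> d k \<le> alpha k i * M"
    using alpha_pos[of k i] by (simp add: pos_divide_le_eq mult.commute)
  have "g i (x k) \<bullet> (z - x k) + (1/2) * N * m i \<le> f i z - f i (x k)"
    using strongly_convex[where i = i and x = "x k" and y = z]
    unfolding N_def by (simp add: norm_minus_commute)
  also have "\<dots> \<le> t k * (g i (x k) \<bullet> d k + (1/2) * dd * alpha k i)"
    using below[of i] stepsize_bounds(4)[of i k] unfolding dd_def by linarith
  also have "\<dots> \<le> t k * (alpha k i * M + (1/2) * dd * alpha k i)"
    using model stepsize_bounds(1)[of k] by (intro mult_left_mono) auto
  finally have "(g i (x k) \<bullet> (z - x k)) / alpha k i + (1/2) * N * (m i / alpha k i)
      \<le> t k * (M + (1/2) * dd)"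
    using alpha_pos[of k i] by (simp add: field_simps)
  with opt have bound: "M + dd - D + (1/2) * N * (m i / alpha k i) \<le> t k * (M + (1/2) * dd)"
    by linarith
  have expand: "(norm (x (Suc k) - z))\<^sup>2 = N - 2 * t k * D + (t k)\<^sup>2 * dd"
    unfolding iterate N_def D_def dd_def power2_norm_eq_inner
    by (simp add: algebra_simps power2_eq_square inner_commute)
  have "2 * t k * (M + dd - D + (1/2) * N * (m i / alpha k i)) \<le> 2 * t k * (t k * (M + (1/2) * dd))"
    using bound stepsize_bounds(1)[of k] by (intro mult_left_mono) auto
  moreover have "0 \<le> t k * (1 - t k) * (M + dd)"
    using stepsize_bounds(1,2)[of k] M_dd by simp
  ultimately have "N - 2 * t k * D + (t k)\<^sup>2 * dd \<le> (1 - t k * m i / alpha k i) * N"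
    by (simp add: algebra_simps power2_eq_square)
  with expand show ?thesis
    unfolding N_def by (intro that) simp
qed

lemma distance_contraction:
  assumes "\<And>i. f i z \<le> f i (x (Suc k))"
  shows "norm (x (Suc k) - z) \<le> sqrt (1 - Min (range (\<lambda>i. t k * m i / alpha k i))) * norm (x k - z)"
proof -
  obtain i where "(norm (x (Suc k) - z))\<^sup>2 \<le> (1 - t k * m i / alpha k i) * (norm (x k - z))\<^sup>2"
    using squared_distance_contraction assms by blast
  also have "\<dots> \<le> (1 - Min (range (\<lambda>i. t k * m i / alpha k i))) * (norm (x k - z))\<^sup>2"
    by (intro mult_right_mono diff_left_mono Min_le) auto
  finally have "sqrt ((norm (x (Suc k) - z))\<^sup>2)
      \<le> sqrt ((1 - Min (range (\<lambda>i. t k * m i / alpha k i))) * (norm (x k - z))\<^sup>2)"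
    by (rule real_sqrt_le_mono)
  thus ?thesis
    by (simp add: real_sqrt_mult)
qed

lemma curvature_ratio_bounds:
  shows "0 < Min (range (\<lambda>i. m i / L i))" and "Min (range (\<lambda>i. m i / L i)) \<le> 1"
proof -
  have "Min (range (\<lambda>i. m i / L i)) \<in> range (\<lambda>i. m i / L i)"
    by (rule Min_in) auto
  then obtain i0 where "Min (range (\<lambda>i. m i / L i)) = m i0 / L i0"
    by blast
  thus "0 < Min (range (\<lambda>i. m i / L i))" "Min (range (\<lambda>i. m i / L i)) \<le> 1"
    using m_pos[of i0] m_le_L[of i0] L_pos[of i0] by auto
qed

lemma stepsize_uniform_lower_bound: "gamma * Min (range (\<lambda>i. m i / L i)) \<le> t k"
proof -
  have "gamma * Min (range (\<lambda>i. m i / L i)) \<le> Min (range (\<lambda>i. gamma * alpha k i / L i))"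
  proof (rule Min.boundedI)
    fix b assume "b \<in> range (\<lambda>i. gamma * alpha k i / L i)"
    then obtain j where b: "b = gamma * (alpha k j / L j)"
      by auto
    have "Min (range (\<lambda>i. m i / L i)) \<le> m j / L j"
      by (rule Min_le) auto
    also have "\<dots> \<le> alpha k j / L j"
      using alpha_lower[of j k] L_pos[of j] by (intro divide_right_mono) auto
    finally show "gamma * Min (range (\<lambda>i. m i / L i)) \<le> b"
      unfolding b using gamma by (intro mult_left_mono) auto
  qed auto
  with stepsize_bounds(3)[of k] show ?thesis
    by linarith
qed

lemma contraction_factor_uniform:
  obtains c where "0 \<le> c" "c < 1" "\<And>k. sqrt (1 - Min (range (\<lambda>i. t k * m i / alpha k i))) \<le> c"
proof -
  define \<kappa> where "\<kappa> = Min (range (\<lambda>i. m i / L i))"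
  have "gamma * \<kappa> * \<kappa> \<le> Min (range (\<lambda>i. t k * m i / alpha k i))" for k
  proof (rule Min.boundedI)
    fix a assume "a \<in> range (\<lambda>i. t k * m i / alpha k i)"
    then obtain i where a: "a = t k * (m i / alpha k i)"
      by auto
    have "\<kappa> \<le> m i / L i"
      unfolding \<kappa>_def by (rule Min_le) auto
    also have "\<dots> \<le> m i / alpha k i"
      using alpha_upper[of k i] alpha_pos[of k i] m_pos[of i] by (intro divide_left_mono) auto
    finally show "gamma * \<kappa> * \<kappa> \<le> a"
      unfolding a using stepsize_uniform_lower_bound[of k, folded \<kappa>_def] stepsize_bounds(1)[of k]
        gamma curvature_ratio_bounds[folded \<kappa>_def]
      by (intro mult_mono) auto
  qed auto
  hence "sqrt (1 - Min (range (\<lambda>i. t k * m i / alpha k i))) \<le> sqrt (1 - gamma * \<kappa> * \<kappa>)" for k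
    by (intro real_sqrt_le_mono diff_left_mono)
  moreover have "0 < gamma * \<kappa> * \<kappa>" "gamma * \<kappa> * \<kappa> \<le> 1"
    using gamma curvature_ratio_bounds[folded \<kappa>_def] by (auto simp: mult_le_one)
  ultimately show ?thesis
    by (intro that[of "sqrt (1 - gamma * \<kappa> * \<kappa>)"]) auto
qed

lemma LIMSEQ_of_lower_bound:
  assumes "\<And>k i. f i w \<le> f i (x k)"
  shows "x \<longlonglongrightarrow> w"
proof -
  obtain c where c: "0 \<le> c" "c < 1"
    and factor: "\<And>k. sqrt (1 - Min (range (\<lambda>i. t k * m i / alpha k i))) \<le> c"
    using contraction_factor_uniform by blast
  show ?thesis
  proof (rule LIMSEQ_of_contraction[OF c])
    fix k
    show "norm (x (Suc k) - w) \<le> c * norm (x k - w)"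
      using distance_contraction[of w k] assms factor[of k]
      by (meson mult_right_mono norm_ge_zero order_trans)
  qed
qed

lemma lower_bound_unique:
  assumes "\<And>k i. f i w \<le> f i (x k)" and "\<And>i. f i y \<le> f i w"
  shows "y = w"
proof -
  have "x \<longlonglongrightarrow> y"
    using assms by (intro LIMSEQ_of_lower_bound) (meson order_trans)
  moreover have "x \<longlonglongrightarrow> w"
    using assms(1) by (rule LIMSEQ_of_lower_bound)
  ultimately show ?thesis
    by (rule LIMSEQ_unique)
qed

lemma lower_bound_exists: "\<exists>w. \<forall>k i. f i w \<le> f i (x k)"
proof -
  fix i0 :: 'i
  have "x k \<in> cball (x 0) (2 * norm (g i0 (x 0)) / m i0)" for k
    using sublevel_bounded[OF f_antimono[of 0 k i0]] by (simp add: dist_norm norm_minus_commute)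
  then obtain w r where r: "strict_mono r" and lim: "(x \<circ> r) \<longlonglongrightarrow> w"
    using compact_imp_seq_compact[OF compact_cball] unfolding seq_compact_def by metis
  have "f i w \<le> f i (x k)" for k i
  proof (rule LIMSEQ_le_const2)
    show "(\<lambda>n. f i (x (r n))) \<longlonglongrightarrow> f i w"
      using isCont_tendsto_compose[OF continuous lim] by (simp add: comp_def)
    show "\<exists>N. \<forall>n\<ge>N. f i (x (r n)) \<le> f i (x k)"
      using seq_suble[OF r] by (intro exI[of _ k] allI impI f_antimono) (meson order_trans)
  qed
  thus ?thesis
    by blast
qed

end

lemma cone_le_polyhedral_cone_iff:
  "cone_le (polyhedral_cone A) u v \<longleftrightarrow> (\<forall>i. (A *v u) $ i \<le> (A *v v) $ i)"
  by (simp add: cone_le_def polyhedral_cone_def vec_le_def matrix_vector_mult_diff_distrib)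

lemma matrix_vector_mult_row_of_product:
  "(A *v (J *v h)) $ i = (A $ i v* J) \<bullet> h"
  by (simp add: matrix_vector_mul_component dot_lmul_matrix)

lemma matrix_matrix_mult_diff_row:
  fixes A :: "'a::comm_ring_1^'m^'l" and J J' :: "'a^'n^'m"
  shows "(A ** (J - J')) $ i = A $ i v* J - A $ i v* J'"
proof -
  have "(A ** B) $ i = A $ i v* B" for B :: "'a^'n^'m"
    by (simp add: vec_eq_iff matrix_matrix_mult_def vector_matrix_mult_def mult.commute)
  thus ?thesis
    by (simp add: vector_matrix_mult_diff_rdistrib)
qed

lemma strongly_K_convex_rowwise:
  assumes "strongly_K_convex (polyhedral_cone A) F JF mu"
  shows "(A $ i v* JF x) \<bullet> (y - x) + (1/2) * (norm (y - x))\<^sup>2 * (A *v mu) $ i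
           \<le> (A *v F y) $ i - (A *v F x) $ i"
  using assms unfolding strongly_K_convex_def cone_le_polyhedral_cone_iff
  by (simp add: matrix_vector_mult_row_of_product algebra_simps)

lemma K_smooth_rowwise:
  assumes "K_smooth (polyhedral_cone A) F JF ell"
  shows "(A *v F y) $ i - (A *v F x) $ i
           \<le> (A $ i v* JF x) \<bullet> (y - x) + (1/2) * (norm (y - x))\<^sup>2 * (A *v ell) $ i"
  using assms unfolding K_smooth_def cone_le_polyhedral_cone_iff
  by (simp add: matrix_vector_mult_row_of_product algebra_simps)

lemma bb_alpha_between:
  assumes "xp \<noteq> xc" and "0 < a" and "amin \<le> a" and "b \<le> amax"
    and lower: "a * (norm (xc - xp))\<^sup>2 \<le> (xc - xp) \<bullet> ((A ** (JF xc - JF xp)) $ i)"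
    and upper: "(xc - xp) \<bullet> ((A ** (JF xc - JF xp)) $ i) \<le> b * (norm (xc - xp))\<^sup>2"
  shows "a \<le> bb_alpha amin amax A JF xp xc $ i \<and> bb_alpha amin amax A JF xp xc $ i \<le> b"
proof -
  define q where "q = (xc - xp) \<bullet> ((A ** (JF xc - JF xp)) $ i)"
  have s: "0 < (norm (xc - xp))\<^sup>2"
    using assms(1) by simp
  hence "a \<le> q / (norm (xc - xp))\<^sup>2" "q / (norm (xc - xp))\<^sup>2 \<le> b"
    using lower upper by (simp_all add: q_def pos_le_divide_eq pos_divide_le_eq)
  moreover have "0 < a * (norm (xc - xp))\<^sup>2"
    using assms(2) s by simp
  with lower have "bb_alpha amin amax A JF xp xc $ i = max amin (min (q / (norm (xc - xp))\<^sup>2) amax)"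
    unfolding bb_alpha_def Let_def q_def by simp
  ultimately show ?thesis
    using assms(3,4) unfolding max_def min_def by auto
qed

lemma scalarized_family:
  assumes "strongly_K_convex (polyhedral_cone A) F JF mu" and "K_smooth (polyhedral_cone A) F JF ell"
    and "\<And>i. 0 < (A *v mu) $ i" and "\<And>z. isCont F z"
  shows "strongly_convex_smooth_family (\<lambda>i y. (A *v F y) $ i) (\<lambda>i y. A $ i v* JF y)
           (\<lambda>i. (A *v mu) $ i) (\<lambda>i. (A *v ell) $ i)"
proof
  show "isCont (\<lambda>y. (A *v F y) $ i) z" for i z
    unfolding matrix_vector_mul_component using assms(4) by (intro continuous_intros)
qed (use assms strongly_K_convex_rowwise K_smooth_rowwise in auto)

lemma bb_alpha_between_curvatures:
  assumes "strongly_convex_smooth_family f (\<lambda>i y. A $ i v* JF y) m L"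
    and "xp \<noteq> xc" and "amin \<le> m i" and "L i \<le> amax"
  shows "m i \<le> bb_alpha amin amax A JF xp xc $ i \<and> bb_alpha amin amax A JF xp xc $ i \<le> L i"
proof -
  interpret strongly_convex_smooth_family f "\<lambda>i y. A $ i v* JF y" m L
    by fact
  show ?thesis
    using secant_bounds[where i = i and x = xp and y = xc]
    by (intro bb_alpha_between[OF assms(2) m_pos assms(3,4)]) (simp_all add: matrix_matrix_mult_diff_row)
qed

lemma dir_obj_eq_Max:
  "dir_obj A J alpha e = Max (range (\<lambda>i. ((A $ i v* J) /\<^sub>R alpha $ i) \<bullet> e)) + (1/2) * (norm e)\<^sup>2"
proof -
  have "(A *v (J *v e)) $ i / alpha $ i = ((A $ i v* J) /\<^sub>R alpha $ i) \<bullet> e" for i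
    by (simp add: matrix_vector_mult_row_of_product divide_inverse mult.commute)
  thus ?thesis
    unfolding dir_obj_def Sup_inner_prob_simplex by simp
qed

lemma bb_accept_iff:
  "bb_accept A F JF gamma alpha x d j \<longleftrightarrow>
     (\<forall>i. (A *v F (x + gamma ^ j *\<^sub>R d)) $ i - (A *v F x) $ i
            \<le> gamma ^ j * ((A $ i v* JF x) \<bullet> d + (1/2) * (norm d)\<^sup>2 * alpha $ i))"
  unfolding bb_accept_def vec_le_def
  by (simp add: matrix_vector_mult_row_of_product algebra_simps)

theorem lemma5p3:
  fixes A :: "real^'m^'l"
    and F :: "real^'n \<Rightarrow> real^'m"
    and JF :: "real^'n \<Rightarrow> real^'n^'m"
    and ell mu :: "real^'m"
    and amin amax gamma :: real
    and xm1 :: "real^'n"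
    and x d :: "nat \<Rightarrow> real^'n"
    and alpha :: "nat \<Rightarrow> real^'l"
    and t :: "nat \<Rightarrow> real"
  defines "K \<equiv> polyhedral_cone A"
  assumes K_pointed: "pointed_cone K"
    and K_int: "interior K \<noteq> {}"
    and A_in: "(\<lambda>y. A *v y) ` K = nonneg_orthant"
    and F_deriv: "\<And>z. (F has_derivative (\<lambda>h. JF z *v h)) (at z)"
    and smooth: "K_smooth K F JF ell" and ell_int: "ell \<in> interior K"
    and sconv: "strongly_K_convex K F JF mu" and mu_int: "mu \<in> interior K"
    and amin_pos: "0 < amin"
    and amin_le: "\<And>i. amin \<le> (A *v mu) $ i"
    and amax_ge: "\<And>i. (A *v ell) $ i \<le> amax"
    and start: "xm1 \<noteq> x 0"
    and gamma: "0 < gamma" "gamma < 1"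
    and alpha_def: "\<And>k. alpha k = bb_alpha amin amax A JF (if k = 0 then xm1 else x (k - 1)) (x k)"
    and d_min: "\<And>k e. dir_obj A (JF (x k)) (alpha k) (d k) \<le> dir_obj A (JF (x k)) (alpha k) e"
    and d_nz: "\<And>k. d k \<noteq> 0"
    and t_def: "\<And>k. t k = bb_stepsize A F JF gamma (alpha k) (x k) (d k)"
    and x_next: "\<And>k. x (Suc k) = x k + t k *\<^sub>R d k"
  shows "(\<forall>k. vec_le (A *v mu) (alpha k) \<and> vec_le (alpha k) (A *v ell))
       \<and> (\<forall>k. t k \<ge> Min ((\<lambda>i. gamma * alpha k $ i / (A *v ell) $ i) ` UNIV))
       \<and> (\<exists>xs. x \<longlonglongrightarrow> xs \<and> K_efficient K F xs
            \<and> (\<forall>k. norm (x (Suc k) - xs)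
                   \<le> sqrt (1 - Min ((\<lambda>i. t k * (A *v mu) $ i / alpha k $ i) ` UNIV)) * norm (x k - xs)))"
proof -
  have m_pos: "0 < (A *v mu) $ i" for i
    using amin_pos amin_le[of i] by linarith
  have family: "strongly_convex_smooth_family (\<lambda>i y. (A *v F y) $ i) (\<lambda>i y. A $ i v* JF y)
      (\<lambda>i. (A *v mu) $ i) (\<lambda>i. (A *v ell) $ i)"
    using sconv smooth m_pos has_derivative_continuous[OF F_deriv] unfolding K_def
    by (rule scalarized_family)
  have moved: "(if k = 0 then xm1 else x (k - 1)) \<noteq> x k" for k
    using start d_nz x_next t_def gamma by (cases k) (auto simp: bb_stepsize_def)
  have alpha_bounds: "(A *v mu) $ i \<le> alpha k $ i \<and> alpha k $ i \<le> (A *v ell) $ i" for k i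
    unfolding alpha_def by (rule bb_alpha_between_curvatures[OF family moved amin_le amax_ge])
  interpret bb_descent "\<lambda>i y. (A *v F y) $ i" "\<lambda>i y. A $ i v* JF y"
      "\<lambda>i. (A *v mu) $ i" "\<lambda>i. (A *v ell) $ i" gamma "\<lambda>k i. alpha k $ i" x d t
    using gamma alpha_bounds d_min x_next
    by (intro bb_descent.intro[OF family] bb_descent_axioms.intro)
      (simp_all add: t_def bb_stepsize_def bb_accept_iff dir_obj_eq_Max)
  obtain w where w: "\<And>k i. (A *v F w) $ i \<le> (A *v F (x k)) $ i"
    using lower_bound_exists by blast
  have "K_efficient K F w"
    unfolding K_efficient_def K_def cone_le_polyhedral_cone_iff
    using lower_bound_unique[OF w] by blast
  then show ?thesis
    using alpha_bounds stepsize_bounds(3) LIMSEQ_of_lower_bound[OF w] distance_contraction w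
    unfolding vec_le_def by blast
qed

end
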